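(* Let $n$ be a nonnegative integer and define \[ \widetilde{R}_n(a,c)=(1-a)_n(a)_n\,{}_3F_2\!\left(\left.{-n,a-c-n,c \atop \frac{a-n}{2},\frac{1+a-n}{2}}\right| \frac{1}{4}\right). \] Then, whenever all expressions are defined, \[ {}_3F_2\!\left(\left.{-n,a-c-n,c \atop \frac{a-n}{2},\frac{1+a-n}{2}}\right| \frac{1}{4}\right) =\frac{(1+c-a)_n(a-c)_n}{(1-a)_n(a)_n}\,{}_3F_2\!\left(\left.{-n,1-a-n,c \atop \frac{1+c-a-n}{2},\frac{2+c-a-n}{2}}\right| \frac{1}{4}\right), \] i.e. $\widetilde{R}_n(a,c)=\widetilde{R}_n(1+c-a,c)$. The group of transformations of $(a,c)$ generated by $(a,c)\mapsto(a,a-c-n)$ and $(a,c)\mapsto(1+c-a,c)$ is isomorphic to $S_3$ and yields the invariances $\widetilde{R}_n(a,c)=\widetilde{R}_n(a,c)=\widetilde{R}_n(a,a-c-n)=\widetilde{R}_n(1+c-a,c)=\widetilde{R}_n(1+c-a,1-a-n)=\widetilde{R}_n(1-c-n,a-c-n)=\widetilde{R}_n(1-c-n,1-a-n)$. Moreover, $\widetilde{V}_n(x,y,z)=\widetilde{R}_n\!\left(\frac{2+2x-y-z-n}{3},\frac{1+x+y-2z-2n}{3}\right)$ is invariant under all six permutations of $x,y,z$.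
   Context: For $a\in\mathbb{C}$, $(a)_0=1$ and $(a)_k=a(a+1)\cdots(a+k-1)$ for $k\ge1$. The hypergeometric series is ${}_rF_s\!\left(\left.{\alpha_1,\ldots,\alpha_r\atop \beta_1,\ldots,\beta_s}\right|z\right)=\sum_{k\ge0}\frac{(\alpha_1)_k\cdots(\alpha_r)_k}{k!(\beta_1)_k\cdots(\beta_s)_k}z^k$, with no lower parameter zero or a negative integer; when an upper parameter is $-n$ it is a finite sum over $0\le k\le n$. *)

theory Defs
  imports Complex_Main
begin

definition lower_ok :: "complex \<Rightarrow> bool" where
  "lower_ok b \<longleftrightarrow> (\<forall>m::nat. b \<noteq> - of_nat m)"

definition hyp3F2_term :: "nat \<Rightarrow> complex \<Rightarrow> complex \<Rightarrow> complex \<Rightarrow> complex \<Rightarrow> complex \<Rightarrow> complex" where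
  "hyp3F2_term n a2 a3 b1 b2 z =
     (\<Sum>k\<le>n. pochhammer (- of_nat n) k * pochhammer a2 k * pochhammer a3 k
        / (fact k * pochhammer b1 k * pochhammer b2 k) * z ^ k)"

definition FR :: "nat \<Rightarrow> complex \<Rightarrow> complex \<Rightarrow> complex" where
  "FR n a c = hyp3F2_term n (a - c - of_nat n) c ((a - of_nat n) / 2) ((1 + a - of_nat n) / 2) (1/4)"

definition R_defined :: "nat \<Rightarrow> complex \<Rightarrow> complex \<Rightarrow> bool" where
  "R_defined n a c \<longleftrightarrow> lower_ok ((a - of_nat n) / 2) \<and> lower_ok ((1 + a - of_nat n) / 2)"

definition Rt :: "nat \<Rightarrow> complex \<Rightarrow> complex \<Rightarrow> complex" where
  "Rt n a c = pochhammer (1 - a) n * pochhammer a n * FR n a c"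

definition V_args :: "nat \<Rightarrow> complex \<Rightarrow> complex \<Rightarrow> complex \<Rightarrow> complex \<times> complex" where
  "V_args n x y z = ((2 + 2*x - y - z - of_nat n) / 3, (1 + x + y - 2*z - 2 * of_nat n) / 3)"

definition Vt :: "nat \<Rightarrow> complex \<Rightarrow> complex \<Rightarrow> complex \<Rightarrow> complex" where
  "Vt n x y z = Rt n (fst (V_args n x y z)) (snd (V_args n x y z))"

definition V_defined :: "nat \<Rightarrow> complex \<Rightarrow> complex \<Rightarrow> complex \<Rightarrow> bool" where
  "V_defined n x y z = R_defined n (fst (V_args n x y z)) (snd (V_args n x y z))"

definition sig :: "nat \<Rightarrow> complex \<times> complex \<Rightarrow> complex \<times> complex" where
  "sig n p = (fst p, fst p - snd p - of_nat n)"

definition tau :: "complex \<times> complex \<Rightarrow> complex \<times> complex" where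
  "tau p = (1 + snd p - fst p, snd p)"

end

theory Submission
  imports Defs "HOL-Computational_Algebra.Polynomial"
begin

(* Clearing denominators with Legendre's duplication formula (s/2)_k ((1+s)/2)_k 4^k = (s)_(2k)
   turns R~_n(a,c) into (-1)^n L((1+x+x^2)^n), where b = a-c-n and L is the linear functional
   x^m |-> (b)_m (c)_(2n-m) on polynomials of degree at most 2n. By Vandermonde, L(x^i (1+x)^N) is
   a product of three Pochhammer symbols. Expanding (1+x+x^2)^n = ((1+x)^2 - x)^n therefore gives
   a sum symmetric in b and c, which is the invariance under (a,c) |-> (a, a-c-n); expanding it as
   ((1+x) + x^2)^n gives a second sum which, after the reflection (z)_k = (-1)^k (1-z-k)_k, is the
   first one with a replaced by 1+c-a. The two involutions generate S_3, and in the coordinates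
   of V~_n they act as the transpositions of y,z and of x,y. *)

definition pochhammer_functional :: "nat \<Rightarrow> 'a::comm_ring_1 \<Rightarrow> 'a \<Rightarrow> 'a poly \<Rightarrow> 'a" where
  "pochhammer_functional n b c p = (\<Sum>m\<le>2*n. coeff p m * pochhammer b m * pochhammer c (2*n - m))"

lemma pochhammer_functional_sum:
  "pochhammer_functional n b c (sum f K) = (\<Sum>k\<in>K. pochhammer_functional n b c (f k))"
  unfolding pochhammer_functional_def by (simp add: coeff_sum sum_distrib_right sum.swap[of _ K])

lemma pochhammer_functional_smult:
  "pochhammer_functional n b c (smult s p) = s * pochhammer_functional n b c p"
  unfolding pochhammer_functional_def by (simp add: sum_distrib_left mult_ac)

lemma pochhammer_functional_monom_mult_linear_power:
  fixes b c :: "'a::comm_ring_1"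
  assumes "i + N \<le> 2*n"
  shows "pochhammer_functional n b c (monom 1 i * [:1,1:]^N)
     = pochhammer b i * pochhammer c (2*n - i - N) * pochhammer (b + c + of_nat (2*n - N)) N"
proof -
  define f where
    "f m = coeff (monom 1 i * [:1::'a,1:]^N) m * pochhammer b m * pochhammer c (2*n - m)" for m
  have f_zero: "f m = 0" if "m \<notin> {i..i+N}" for m
    using that by (auto simp: f_def coeff_monom_mult coeff_eq_0 degree_linear_power not_le)
  have "pochhammer_functional n b c (monom 1 i * [:1,1:]^N) = sum f {i..i+N}"
    unfolding pochhammer_functional_def f_def[symmetric]
    by (rule sum.mono_neutral_right) (use assms f_zero in auto)
  also have "\<dots> = (\<Sum>j\<le>N. f (i + j))"
    using sum.shift_bounds_cl_nat_ivl[where m=0 and k=i and n=N and g=f]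
    by (simp add: atMost_atLeast0 add.commute)
  also have "\<dots> = (\<Sum>j\<le>N. pochhammer b i * pochhammer c (2*n - i - N) *
       (of_nat (N choose j) * pochhammer (b + of_nat i) j * pochhammer (c + of_nat (2*n - i - N)) (N - j)))"
  proof (rule sum.cong[OF refl])
    fix j assume j: "j \<in> {..N}"
    have "2*n - (i+j) = (2*n - i - N) + (N - j)" using j assms by auto
    then have "pochhammer c (2*n - (i + j))
        = pochhammer c (2*n - i - N) * pochhammer (c + of_nat (2*n - i - N)) (N - j)"
      by (simp only: pochhammer_product')
    with j show "f (i + j) = pochhammer b i * pochhammer c (2*n - i - N) *
       (of_nat (N choose j) * pochhammer (b + of_nat i) j * pochhammer (c + of_nat (2*n - i - N)) (N - j))"
      by (simp add: f_def coeff_monom_mult coeff_linear_poly_power pochhammer_product' mult_ac)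
  qed
  also have "\<dots> = pochhammer b i * pochhammer c (2*n - i - N) *
       pochhammer (b + of_nat i + (c + of_nat (2*n - i - N))) N"
    by (simp add: pochhammer_binomial_sum sum_distrib_left)
  also have "b + of_nat i + (c + of_nat (2*n - i - N)) = b + c + of_nat (2*n - N)"
    using assms by simp
  finally show ?thesis .
qed

definition trinomial_sum_alt :: "nat \<Rightarrow> 'a::comm_ring_1 \<Rightarrow> 'a \<Rightarrow> 'a" where
  "trinomial_sum_alt n b c = (\<Sum>k\<le>n. (-1)^k * of_nat (n choose k) * pochhammer b k * pochhammer c k
       * pochhammer (b + c + of_nat (2*k)) (2*n - 2*k))"

definition trinomial_sum_pos :: "nat \<Rightarrow> 'a::comm_ring_1 \<Rightarrow> 'a \<Rightarrow> 'a" where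
  "trinomial_sum_pos n b c = (\<Sum>k\<le>n. of_nat (n choose k) * pochhammer c k
       * pochhammer (b + c + of_nat (2*n - k)) k * pochhammer b (2*n - 2*k))"

lemma pochhammer_functional_trinomial_power_alt:
  fixes b c :: "'a::comm_ring_1"
  shows "pochhammer_functional n b c ([:1,1,1:]^n) = trinomial_sum_alt n b c"
proof -
  have "[:0,-1::'a:] = smult (-1) (monom 1 1)"
    by (simp add: monom_Suc)
  then have "[:0,-1:]^k = smult ((-1)^k) (monom (1::'a) k)" for k
    by (simp only: smult_power monom_power) simp
  moreover have "[:1,1,1:] = [:0,-1::'a:] + [:1,1:]^2"
    by (simp add: power2_eq_square)
  ultimately have "[:1,1,1:]^n
      = (\<Sum>k\<le>n. smult ((-1)^k * of_nat (n choose k)) (monom 1 k * [:1,1::'a:]^(2*n - 2*k)))"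
    by (simp add: binomial_ring power_mult[symmetric] diff_mult_distrib of_nat_poly mult_ac)
  also have "pochhammer_functional n b c \<dots> = trinomial_sum_alt n b c"
    unfolding trinomial_sum_alt_def pochhammer_functional_sum pochhammer_functional_smult
  proof (rule sum.cong[OF refl])
    fix k assume "k \<in> {..n}"
    then show "(-1)^k * of_nat (n choose k) * pochhammer_functional n b c (monom 1 k * [:1,1:]^(2*n - 2*k))
      = (-1)^k * of_nat (n choose k) * pochhammer b k * pochhammer c k
          * pochhammer (b + c + of_nat (2*k)) (2*n - 2*k)"
      by (simp add: pochhammer_functional_monom_mult_linear_power)
  qed
  finally show ?thesis .
qed

lemma pochhammer_functional_trinomial_power_pos:
  fixes b c :: "'a::comm_ring_1"
  shows "pochhammer_functional n b c ([:1,1,1:]^n) = trinomial_sum_pos n b c"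
proof -
  have "[:1,1,1:] = [:1,1::'a:] + monom 1 2"
    by (simp add: monom_Suc numeral_2_eq_2)
  then have "[:1,1,1:]^n
      = (\<Sum>k\<le>n. smult (of_nat (n choose k)) (monom 1 (2*n - 2*k) * [:1,1::'a:]^k))"
    by (simp add: binomial_ring monom_power diff_mult_distrib of_nat_poly mult_ac)
  also have "pochhammer_functional n b c \<dots> = trinomial_sum_pos n b c"
    unfolding trinomial_sum_pos_def pochhammer_functional_sum pochhammer_functional_smult
  proof (rule sum.cong[OF refl])
    fix k assume "k \<in> {..n}"
    then have "2*n - 2*k + k \<le> 2*n" and "2*n - (2*n - 2*k) - k = k" by auto
    from pochhammer_functional_monom_mult_linear_power[OF this(1), of b c] this(2)
    show "of_nat (n choose k) * pochhammer_functional n b c (monom 1 (2*n - 2*k) * [:1,1:]^k)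
      = of_nat (n choose k) * pochhammer c k
          * pochhammer (b + c + of_nat (2*n - k)) k * pochhammer b (2*n - 2*k)"
      by (simp add: mult_ac)
  qed
  finally show ?thesis .
qed

lemma trinomial_sum_alt_eq_pos: "trinomial_sum_alt n b c = trinomial_sum_pos n b c"
  by (simp flip: pochhammer_functional_trinomial_power_alt pochhammer_functional_trinomial_power_pos)

lemma trinomial_sum_alt_commute: "trinomial_sum_alt n b c = trinomial_sum_alt n c b"
  unfolding trinomial_sum_alt_def by (simp add: mult_ac add_ac)

lemma pochhammer_reflect:
  "pochhammer z k = (-1)^k * pochhammer (1 - z - of_nat k :: 'a::comm_ring_1) k"
  using pochhammer_minus[of "-z" k] by (simp add: algebra_simps)

lemma trinomial_sum_alt_reflect:
  fixes b c :: "'a::comm_ring_1"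
  shows "trinomial_sum_alt n (1 - b - c - of_nat (2*n)) c = trinomial_sum_pos n b c"
  unfolding trinomial_sum_alt_def trinomial_sum_pos_def
proof (rule sum.cong[OF refl])
  fix k assume "k \<in> {..n}"
  then have "k \<le> n" by simp
  let ?b' = "1 - b - c - of_nat (2*n)"
  have "pochhammer ?b' k = (-1)^k * pochhammer (b + c + of_nat (2*n - k)) k"
    using pochhammer_reflect[of ?b' k] \<open>k \<le> n\<close> by (simp add: algebra_simps)
  moreover have "pochhammer (?b' + c + of_nat (2*k)) (2*n - 2*k) = pochhammer b (2*n - 2*k)"
    using pochhammer_reflect[of "?b' + c + of_nat (2*k)" "2*n - 2*k"] \<open>k \<le> n\<close>
    by (simp add: algebra_simps power_mult)
  ultimately show "(-1)^k * of_nat (n choose k) * pochhammer ?b' k * pochhammer c k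
       * pochhammer (?b' + c + of_nat (2*k)) (2*n - 2*k)
     = of_nat (n choose k) * pochhammer c k
       * pochhammer (b + c + of_nat (2*n - k)) k * pochhammer b (2*n - 2*k)"
    by (simp add: mult_ac flip: power_add)
qed

lemma pochhammer_one_minus_mult:
  "pochhammer (1 - a) n * pochhammer a n = (-1)^n * pochhammer (a - of_nat n :: 'a::comm_ring_1) (2*n)"
  using pochhammer_reflect[of "1 - a" n] pochhammer_product'[of "a - of_nat n" n n]
  by (simp add: mult_2)

lemma pochhammer_half_mult_half_succ:
  fixes s :: "'a::field_char_0"
  shows "pochhammer (s/2) k * pochhammer ((1 + s)/2) k * 4^k = pochhammer s (2*k)"
proof -
  have "pochhammer s (2*k) = of_nat (2^(2*k)) * pochhammer (s/2) k * pochhammer (s/2 + 1/2) k"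
    using pochhammer_double[of "s/2" k] by simp
  also have "s/2 + 1/2 = (1 + s)/2"
    by (simp add: field_simps)
  also have "(of_nat (2^(2*k)) :: 'a) = 4^k"
    by (simp add: power_mult)
  finally show ?thesis
    by (simp add: mult_ac)
qed

lemma pochhammer_neg_of_nat_div_fact:
  "pochhammer (- of_nat n) k / fact k = (-1)^k * (of_nat (n choose k) :: 'a::field_char_0)"
  by (simp add: binomial_gbinomial gbinomial_pochhammer)

lemma lower_ok_pochhammer_nonzero: "lower_ok z \<Longrightarrow> pochhammer z k \<noteq> 0"
  unfolding lower_ok_def by (auto simp: pochhammer_eq_0_iff)

definition Rt_poly :: "nat \<Rightarrow> complex \<Rightarrow> complex \<Rightarrow> complex" where
  "Rt_poly n a c = (-1)^n * trinomial_sum_alt n (a - c - of_nat n) c"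

lemma Rt_eq_Rt_poly:
  assumes "R_defined n a c"
  shows "Rt n a c = Rt_poly n a c"
proof -
  define s where "s = a - of_nat n"
  define b where "b = a - c - of_nat n"
  have "pochhammer (s/2) k * pochhammer ((1 + s)/2) k \<noteq> 0" for k
    using assms by (simp add: R_defined_def s_def add_diff_eq lower_ok_pochhammer_nonzero)
  then have "pochhammer s (2*k) \<noteq> 0" for k
    by (simp flip: pochhammer_half_mult_half_succ)
  have "Rt n a c = (\<Sum>k\<le>n. (-1)^n * pochhammer s (2*n) * (pochhammer (- of_nat n) k / fact k)
      * pochhammer b k * pochhammer c k
      / (pochhammer (s/2) k * pochhammer ((1 + s)/2) k * 4^k))"
    unfolding Rt_def FR_def hyp3F2_term_def pochhammer_one_minus_mult
    by (simp add: sum_distrib_left s_def b_def field_simps)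
  also have "\<dots> = (\<Sum>k\<le>n. (-1)^n * ((-1)^k * of_nat (n choose k) * pochhammer b k * pochhammer c k
       * pochhammer (b + c + of_nat (2*k)) (2*n - 2*k)))"
  proof (rule sum.cong[OF refl])
    fix k assume "k \<in> {..n}"
    then have "pochhammer s (2*n) = pochhammer s (2*k) * pochhammer (b + c + of_nat (2*k)) (2*n - 2*k)"
      using pochhammer_product[of "2*k" "2*n" s] by (simp add: s_def b_def)
    with \<open>pochhammer s (2*k) \<noteq> 0\<close> show "(-1)^n * pochhammer s (2*n) * (pochhammer (- of_nat n) k / fact k)
        * pochhammer b k * pochhammer c k / (pochhammer (s/2) k * pochhammer ((1 + s)/2) k * 4^k)
      = (-1)^n * ((-1)^k * of_nat (n choose k) * pochhammer b k * pochhammer c k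
        * pochhammer (b + c + of_nat (2*k)) (2*n - 2*k))"
      unfolding pochhammer_half_mult_half_succ pochhammer_neg_of_nat_div_fact by simp
  qed
  also have "\<dots> = Rt_poly n a c"
    unfolding Rt_poly_def trinomial_sum_alt_def b_def by (simp add: sum_distrib_left)
  finally show ?thesis .
qed

lemma Rt_poly_sig: "case_prod (Rt_poly n) (sig n p) = case_prod (Rt_poly n) p"
  by (simp add: sig_def Rt_poly_def split_beta trinomial_sum_alt_commute)

lemma Rt_poly_tau: "case_prod (Rt_poly n) (tau p) = case_prod (Rt_poly n) p"
proof -
  obtain a c where p: "p = (a, c)" by fastforce
  have "Rt_poly n (1 + c - a) c
      = (-1)^n * trinomial_sum_alt n (1 - (a - c - of_nat n) - c - of_nat (2*n)) c"
    unfolding Rt_poly_def by (simp add: algebra_simps)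
  also have "\<dots> = (-1)^n * trinomial_sum_pos n (a - c - of_nat n) c"
    by (simp only: trinomial_sum_alt_reflect)
  also have "\<dots> = Rt_poly n a c"
    by (simp only: Rt_poly_def trinomial_sum_alt_eq_pos)
  finally show ?thesis
    by (simp add: p tau_def)
qed

lemma sig_tau_relations:
  shows "sig n \<circ> sig n = id" and "tau \<circ> tau = id" and "(sig n \<circ> tau) ^^ 3 = id"
    and "sig n \<noteq> id" and "tau \<noteq> id" and "sig n \<noteq> tau"
proof -
  show "sig n \<circ> sig n = id" "tau \<circ> tau = id" "(sig n \<circ> tau) ^^ 3 = id"
    by (auto simp: sig_def tau_def fun_eq_iff numeral_3_eq_3)
  have "sig n (0, 1) \<noteq> (0, 1)"
  proof
    assume "sig n (0, 1) = (0, 1)"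
    then have "(of_nat (n + 2) :: complex) = 0"
      by (simp add: sig_def algebra_simps)
    then show False
      by (simp only: of_nat_eq_0_iff)
  qed
  then show "sig n \<noteq> id"
    by auto
  have "tau (0, 0) \<noteq> (0, 0)" "sig n (0, 0) \<noteq> tau (0, 0)"
    by (simp_all add: sig_def tau_def)
  then show "tau \<noteq> id" "sig n \<noteq> tau"
    by auto
qed

lemma orbit_sig_tau:
  "{(a, c), (a, a - c - of_nat n), (1 + c - a, c), (1 + c - a, 1 - a - of_nat n),
      (1 - c - of_nat n, a - c - of_nat n), (1 - c - of_nat n, 1 - a - of_nat n)}
    = {(a, c), sig n (a, c), tau (a, c), sig n (tau (a, c)), tau (sig n (a, c)),
       sig n (tau (sig n (a, c)))}"
  by (simp add: sig_def tau_def algebra_simps)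

lemma V_args_swap_yz: "V_args n x z y = sig n (V_args n x y z)"
  by (simp add: V_args_def sig_def field_simps)

lemma V_args_swap_xy: "V_args n y x z = tau (V_args n x y z)"
  by (simp add: V_args_def tau_def field_simps)

lemma Rt_tau_invariant:
  assumes "R_defined n a c" and "R_defined n (1 + c - a) c"
  shows "Rt n a c = Rt n (1 + c - a) c"
  using Rt_poly_tau[of n "(a, c)"] by (simp add: assms Rt_eq_Rt_poly tau_def)

lemma FR_tau_transform:
  assumes "R_defined n a c" and "R_defined n (1 + c - a) c"
    and "pochhammer (1 - a) n * pochhammer a n \<noteq> 0"
  shows "FR n a c = pochhammer (1 + c - a) n * pochhammer (a - c) n
                 / (pochhammer (1 - a) n * pochhammer a n)
                 * hyp3F2_term n (1 - a - of_nat n) c ((1 + c - a - of_nat n) / 2)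
                     ((2 + c - a - of_nat n) / 2) (1/4)"
proof -
  have "1 + c - a - c - of_nat n = 1 - a - of_nat n"
    and "1 + (1 + c - a) - of_nat n = 2 + c - a - of_nat n"
    by simp_all
  then have "FR n (1 + c - a) c = hyp3F2_term n (1 - a - of_nat n) c ((1 + c - a - of_nat n) / 2)
                     ((2 + c - a - of_nat n) / 2) (1/4)"
    unfolding FR_def by (simp only:)
  with Rt_tau_invariant[OF assms(1,2)] assms(3) show ?thesis
    unfolding Rt_def by (simp add: field_simps)
qed

lemma Rt_orbit_invariant:
  "\<forall>(a', c') \<in> {(a, c), (a, a - c - of_nat n), (1 + c - a, c),
          (1 + c - a, 1 - a - of_nat n), (1 - c - of_nat n, a - c - of_nat n),
          (1 - c - of_nat n, 1 - a - of_nat n)}.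
         R_defined n a c \<and> R_defined n a' c' \<longrightarrow> Rt n a c = Rt n a' c'"
proof -
  let ?p = "(a, c)"
  have "\<forall>q \<in> {?p, sig n ?p, tau ?p, sig n (tau ?p), tau (sig n ?p), sig n (tau (sig n ?p))}.
      case_prod (Rt_poly n) q = Rt_poly n a c"
    by (simp add: Rt_poly_sig Rt_poly_tau)
  then show ?thesis
    unfolding orbit_sig_tau by (auto simp: Rt_eq_Rt_poly)
qed

lemma Vt_permutation_invariant:
  "\<forall>(x', y', z') \<in> {(x, y, z), (x, z, y), (y, x, z), (y, z, x), (z, x, y), (z, y, x)}.
         V_defined n x y z \<and> V_defined n x' y' z' \<longrightarrow> Vt n x y z = Vt n x' y' z'"
proof -
  define V where "V x y z = case_prod (Rt_poly n) (V_args n x y z)" for x y z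
  have swap_yz: "V x z y = V x y z" for x y z
    unfolding V_def V_args_swap_yz[where x=x and y=y and z=z] by (rule Rt_poly_sig)
  have swap_xy: "V y x z = V x y z" for x y z
    unfolding V_def V_args_swap_xy[where x=x and y=y and z=z] by (rule Rt_poly_tau)
  have "V x' y' z' = V x y z"
    if "(x', y', z') \<in> {(x, y, z), (x, z, y), (y, x, z), (y, z, x), (z, x, y), (z, y, x)}"
    for x' y' z'
    using that swap_yz swap_xy by auto
  moreover have "Vt n x y z = V x y z" if "V_defined n x y z" for x y z
    using that unfolding V_defined_def Vt_def V_def by (simp add: Rt_eq_Rt_poly split_beta)
  ultimately show ?thesis
    by fastforce
qed

theorem mainTheorem13:
  fixes n :: nat
  shows
   "(\<forall>a c::complex. R_defined n a c \<and> R_defined n (1 + c - a) c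
        \<and> pochhammer (1 - a) n * pochhammer a n \<noteq> 0 \<longrightarrow>
      FR n a c = pochhammer (1 + c - a) n * pochhammer (a - c) n
                 / (pochhammer (1 - a) n * pochhammer a n)
                 * hyp3F2_term n (1 - a - of_nat n) c ((1 + c - a - of_nat n) / 2)
                     ((2 + c - a - of_nat n) / 2) (1/4))
    \<and> (\<forall>a c::complex. R_defined n a c \<and> R_defined n (1 + c - a) c \<longrightarrow>
         Rt n a c = Rt n (1 + c - a) c)
    \<and> (sig n \<circ> sig n = id \<and> tau \<circ> tau = id \<and> (sig n \<circ> tau) ^^ 3 = id
       \<and> sig n \<noteq> id \<and> tau \<noteq> id \<and> sig n \<noteq> tau)
    \<and> (\<forall>a c::complex. \<forall>(a', c') \<in> {(a, c), (a, a - c - of_nat n), (1 + c - a, c),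
          (1 + c - a, 1 - a - of_nat n), (1 - c - of_nat n, a - c - of_nat n),
          (1 - c - of_nat n, 1 - a - of_nat n)}.
         R_defined n a c \<and> R_defined n a' c' \<longrightarrow> Rt n a c = Rt n a' c')
    \<and> (\<forall>x y z::complex. \<forall>(x', y', z') \<in> {(x, y, z), (x, z, y), (y, x, z), (y, z, x),
          (z, x, y), (z, y, x)}.
         V_defined n x y z \<and> V_defined n x' y' z' \<longrightarrow> Vt n x y z = Vt n x' y' z')"
  by (intro conjI allI impI sig_tau_relations Rt_orbit_invariant Vt_permutation_invariant;
      elim conjE; intro FR_tau_transform Rt_tau_invariant; assumption)

end
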